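(* Let $A$ be an $m\times m$ matrix-valued function with entries in $\mathcal N^\infty$ such that $\det A\neq0$, and let $\Phi=[\varphi_1,\cdots,\varphi_r]\in L^2_{M_{m\times r}}$. Let $\psi_i$ denote the $i$-th column of $\Psi:=A\Phi$. Then $\varphi_1,\cdots,\varphi_r$ are independent modulo Nevanlinna class if and only if $\psi_1,\cdots,\psi_r$ are independent modulo Nevanlinna class.
   Context: The Nevanlinna class $\mathcal N$ is the set of functions on the unit circle of the form $f/g$ with $f,g\in H^\infty$, $g\neq0$; $\mathcal N^p=\mathcal N\cap L^p$, $\mathcal N_{\mathbb C^m}$ denotes column vectors with entries in $\mathcal N$. $\det A\neq0$ means $\det A$ is not the zero function. Vectors $\varphi_1,\dots,\varphi_r\in L^2_{\mathbb C^m}$ are independent modulo Nevanlinna class if $a_1,\dots,a_r\in\mathcal N$ and $\sum a_i\varphi_i\in\mathcal N_{\mathbb C^m}$ imply $a_1=\cdots=a_r=0$. *)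

theory Defs
  imports "HOL-Analysis.Analysis"
begin

text \<open>Functions on the unit circle are represented by their values on the
parameter interval [0, 2 pi] (t corresponds to the point e^(i t)), with
Lebesgue measure (normalisation is irrelevant); equalities are almost everywhere.\<close>

abbreviation circ :: "real measure" where
  "circ \<equiv> lebesgue_on {0..2*pi}"

definition Linf :: "(real \<Rightarrow> complex) \<Rightarrow> bool" where
  "Linf f \<longleftrightarrow> f \<in> borel_measurable circ \<and> (\<exists>B. AE t in circ. cmod (f t) \<le> B)"

definition L2 :: "(real \<Rightarrow> complex) \<Rightarrow> bool" where
  "L2 f \<longleftrightarrow> f \<in> borel_measurable circ \<and> integrable circ (\<lambda>t. (cmod (f t))^2)"

text \<open>H-infinity: essentially bounded functions whose Fourier coefficients of
negative index vanish.\<close>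
definition Hinf :: "(real \<Rightarrow> complex) \<Rightarrow> bool" where
  "Hinf f \<longleftrightarrow> Linf f \<and>
     (\<forall>n::nat. n \<ge> 1 \<longrightarrow> (LINT t|circ. f t * exp (\<i> * of_nat n * of_real t)) = 0)"

definition Nev :: "(real \<Rightarrow> complex) \<Rightarrow> bool" where
  "Nev h \<longleftrightarrow> (\<exists>f g. Hinf f \<and> Hinf g \<and> \<not> (AE t in circ. g t = 0) \<and>
                     (AE t in circ. h t = f t / g t))"

definition Nev_inf :: "(real \<Rightarrow> complex) \<Rightarrow> bool" where
  "Nev_inf h \<longleftrightarrow> Nev h \<and> Linf h"

definition indep_mod_Nev :: "('r::finite \<Rightarrow> real \<Rightarrow> complex^'m) \<Rightarrow> bool" where
  "indep_mod_Nev \<phi> \<longleftrightarrow>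
     (\<forall>a :: 'r \<Rightarrow> real \<Rightarrow> complex.
        (\<forall>j. Nev (a j)) \<and> (\<forall>i. Nev (\<lambda>t. (\<Sum>j\<in>UNIV. a j t * (\<phi> j t $ i))))
        \<longrightarrow> (\<forall>j. AE t in circ. a j t = 0))"

end

theory Submission
  imports Defs
begin

(* Multiplying by A carries Nevanlinna relations among the columns of Phi to relations among
   the columns of A Phi. Conversely, by Cramer's rule a relation sum a_j psi_j in N yields the
   relation sum (det A a_j) phi_j in N, so det A a_j = 0; and det A, a Nevanlinna function that
   is not a.e. zero, vanishes only on a null set.

   Everything rests on two facts about H-infinity. It is closed under products: approximating f
   boundedly a.e. by trigonometric polynomials and keeping their analytic parts (which, by
   orthogonality, are no farther from f in L^2) gives analytic polynomials q_j -> f in L^1, and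
   the negative Fourier coefficients of q_j g vanish. A nonzero H-infinity function g vanishes
   only on a null set E: after dividing by a power of z we may assume int g <> 0, and testing g
   against exp (M u), with u the real part of an analytic polynomial approximating the indicator
   of E, gives |int g| exp (M |E| / 2 pi) <= int |g| for every M >= 0, forcing |E| = 0. *)

interpretation circ: finite_measure circ
  by (rule finite_measure_lebesgue_on) auto

lemma (in finite_measure) integral_bounded_convergence:
  fixes s :: "nat \<Rightarrow> 'a \<Rightarrow> 'b::{banach, second_countable_topology}"
  assumes "f \<in> borel_measurable M" "\<And>j. s j \<in> borel_measurable M"
    and "AE x in M. (\<lambda>j. s j x) \<longlonglongrightarrow> f x" and "\<And>j. AE x in M. norm (s j x) \<le> C"
  shows "(\<lambda>j. integral\<^sup>L M (s j)) \<longlonglongrightarrow> integral\<^sup>L M f"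
  using assms by (intro integral_dominated_convergence[where w="\<lambda>_. C"]) auto

lemma (in finite_measure) integral_abs_tendsto_0_if_integral_square_tendsto_0:
  fixes u :: "nat \<Rightarrow> 'a \<Rightarrow> real"
  assumes meas: "\<And>j. u j \<in> borel_measurable M"
    and sq_int: "\<And>j. integrable M (\<lambda>x. (u j x)^2)"
    and lim: "(\<lambda>j. LINT x|M. (u j x)^2) \<longlonglongrightarrow> 0"
  shows "(\<lambda>j. LINT x|M. \<bar>u j x\<bar>) \<longlonglongrightarrow> 0"
proof (rule LIMSEQ_I)
  fix e :: real assume e: "e > 0"
  define \<mu> where "\<mu> = measure M (space M)"
  define d where "d = e / (2 * (\<mu> + 1))"
  have \<mu>: "\<mu> \<ge> 0" by (simp add: \<mu>_def)
  have d: "d > 0" "d * \<mu> < e / 2"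
    using e \<mu> by (auto simp: d_def field_simps)
  obtain N where N: "\<And>j. j \<ge> N \<Longrightarrow> norm (LINT x|M. (u j x)^2) < d * (e / 2)"
    using LIMSEQ_D[OF lim, of "d * (e / 2)"] d e by auto
  have pointwise: "\<bar>y\<bar> \<le> d + y^2 / d" for y :: real
  proof -
    have "0 \<le> (\<bar>y\<bar> - d)^2" by simp
    then have "2 * (d * \<bar>y\<bar>) \<le> d^2 + y^2" by (simp add: power2_diff algebra_simps)
    moreover have "0 \<le> d * \<bar>y\<bar>" using d(1) by simp
    ultimately have "d * \<bar>y\<bar> \<le> d^2 + y^2" by linarith
    with d(1) show ?thesis by (simp add: field_simps power2_eq_square)
  qed
  have "norm (LINT x|M. \<bar>u j x\<bar>) < e" if "j \<ge> N" for j
  proof -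
    have int_bound: "integrable M (\<lambda>x. d + (u j x)^2 / d)"
      using sq_int by (intro Bochner_Integration.integrable_add integrable_divide) auto
    have "norm (LINT x|M. \<bar>u j x\<bar>) = (LINT x|M. \<bar>u j x\<bar>)" by simp
    also have "\<dots> \<le> (LINT x|M. d + (u j x)^2 / d)"
      using int_bound meas pointwise
      by (intro integral_mono Bochner_Integration.integrable_bound[OF int_bound] AE_I2)
         (auto intro: order_trans[OF _ abs_ge_self])
    also have "\<dots> = d * \<mu> + (LINT x|M. (u j x)^2) / d"
      using sq_int by (simp add: \<mu>_def)
    also have "\<dots> < e / 2 + e / 2"
      using N[OF that] d by (intro add_strict_mono) (auto simp: field_simps)
    finally show ?thesis by simp
  qed
  then show "\<exists>N. \<forall>j\<ge>N. norm ((LINT x|M. \<bar>u j x\<bar>) - 0) < e" by auto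
qed

lemma borel_measurable_continuous_on_circ:
  "continuous_on {0..2*pi} f \<Longrightarrow> (f :: real \<Rightarrow> 'a::euclidean_space) \<in> borel_measurable circ"
  by (rule continuous_imp_measurable_on_sets_lebesgue) auto

lemma borel_measurable_cnj: "f \<in> borel_measurable M \<Longrightarrow> (\<lambda>x. cnj (f x)) \<in> borel_measurable M"
  by (rule borel_measurable_continuous_on[OF continuous_on_cnj[OF continuous_on_id]])

lemma borel_measurable_Linf: "Linf f \<Longrightarrow> f \<in> borel_measurable circ"
  unfolding Linf_def by blast

lemma Linf_bound:
  assumes "Linf f"
  obtains B where "B \<ge> 0" "AE t in circ. cmod (f t) \<le> B"
proof -
  obtain B where "AE t in circ. cmod (f t) \<le> B" using assms unfolding Linf_def by blast
  then have "AE t in circ. cmod (f t) \<le> max B 0" by (auto elim: AE_mp)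
  then show ?thesis using that[of "max B 0"] by auto
qed

lemma integrable_Linf: "Linf f \<Longrightarrow> integrable circ f"
  using circ.integrable_const_bound unfolding Linf_def by blast

lemma integrable_Linf_norm_square:
  assumes "Linf f"
  shows "integrable circ (\<lambda>t. (cmod (f t))^2)"
proof -
  obtain B where B: "B \<ge> 0" "AE t in circ. cmod (f t) \<le> B" using Linf_bound[OF assms] .
  show ?thesis
  proof (rule circ.integrable_const_bound)
    show "AE t in circ. norm ((cmod (f t))^2) \<le> B^2"
      using B(2) by eventually_elim (simp add: power_mono)
    show "(\<lambda>t. (cmod (f t))^2) \<in> borel_measurable circ"
      using borel_measurable_Linf[OF assms] by measurable
  qed
qed

lemma Linf_continuous:
  assumes "continuous_on {0..2*pi} f"
  shows "Linf f"
proof -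
  have "compact (f ` {0..2*pi})" by (rule compact_continuous_image[OF assms]) auto
  then obtain B where "\<forall>x\<in>f ` {0..2*pi}. norm x \<le> B"
    using compact_imp_bounded bounded_iff by metis
  then have "AE t in circ. cmod (f t) \<le> B" by (intro AE_I2) auto
  then show ?thesis unfolding Linf_def using borel_measurable_continuous_on_circ[OF assms] by blast
qed

lemma Linf_const: "Linf (\<lambda>t. c)"
  by (rule Linf_continuous) auto

lemma Linf_add:
  assumes "Linf f" "Linf g"
  shows "Linf (\<lambda>t. f t + g t)"
proof -
  obtain B C where "AE t in circ. cmod (f t) \<le> B" "AE t in circ. cmod (g t) \<le> C"
    using assms unfolding Linf_def by blast
  then have "AE t in circ. cmod (f t + g t) \<le> B + C"
    by eventually_elim (meson add_mono norm_triangle_ineq order_trans)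
  then show ?thesis using assms unfolding Linf_def by auto
qed

lemma Linf_diff:
  assumes "Linf f" "Linf g"
  shows "Linf (\<lambda>t. f t - g t)"
proof -
  obtain B C where "AE t in circ. cmod (f t) \<le> B" "AE t in circ. cmod (g t) \<le> C"
    using assms unfolding Linf_def by blast
  then have "AE t in circ. cmod (f t - g t) \<le> B + C"
    by eventually_elim (meson add_mono norm_triangle_ineq4 order_trans)
  then show ?thesis using assms unfolding Linf_def by auto
qed

lemma Linf_mult:
  assumes "Linf f" "Linf g"
  shows "Linf (\<lambda>t. f t * g t)"
proof -
  obtain B C where "AE t in circ. cmod (f t) \<le> B" "AE t in circ. cmod (g t) \<le> C"
    using assms unfolding Linf_def by blast
  then have "AE t in circ. cmod (f t * g t) \<le> B * C"
    by eventually_elim (simp add: norm_mult mult_mono')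
  then show ?thesis using assms unfolding Linf_def by auto
qed

lemma Linf_cis_power: "Linf (\<lambda>t. cis t ^ n)"
  by (rule Linf_continuous) (intro continuous_intros)

lemma integrable_Linf_mult_cis_power: "Linf f \<Longrightarrow> integrable circ (\<lambda>t. f t * cis t ^ n)"
  by (intro integrable_Linf Linf_mult Linf_cis_power)

lemma Linf_poly_cis: "Linf (\<lambda>t. poly P (cis t))"
  by (rule Linf_continuous) (intro continuous_intros)

lemma exp_of_nat_mult_eq_cis_power: "exp (\<i> * of_nat n * of_real t) = cis t ^ n"
proof -
  have "\<i> * of_nat n * of_real t = of_nat n * (\<i> * of_real t)" by simp
  then show ?thesis by (simp only: exp_of_nat_mult cis_conv_exp)
qed

lemma integral_cis_power:
  assumes "n \<ge> 1"
  shows "(LINT t|circ. cis t ^ n) = 0"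
proof -
  let ?F = "\<lambda>t. cis (real n * t) / (\<i> * of_nat n)"
  have "((\<lambda>t. cis t ^ n) has_integral (?F (2*pi) - ?F 0)) {0..2*pi}"
  proof (rule fundamental_theorem_of_calculus)
    fix x assume "x \<in> {0..2*pi}"
    have "((\<lambda>z. exp (\<i> * of_nat n * z) / (\<i> * of_nat n)) has_field_derivative
         (\<i> * of_real (real n)) * exp (\<i> * of_nat n * of_real x) / (\<i> * of_nat n)) (at (of_real x))"
      by (auto intro!: derivative_eq_intros)
    from has_vector_derivative_real_field[OF this]
    have "(?F has_vector_derivative cis x ^ n) (at x)"
      using assms exp_of_nat_mult_eq_cis_power[of n x] by (simp add: cis_conv_exp mult.assoc)
    then show "(?F has_vector_derivative cis x ^ n) (at x within {0..2*pi})"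
      by (rule has_vector_derivative_at_within)
  qed auto
  moreover have "?F (2*pi) = ?F 0"
    using Complex.DeMoivre[of "2*pi" n] by simp
  ultimately have "integral {0..2*pi} (\<lambda>t. cis t ^ n) = 0"
    by (simp add: integral_unique)
  then show ?thesis
    by (subst lebesgue_integral_eq_integral) (auto intro: integrable_Linf Linf_cis_power)
qed

section \<open>The algebra of bounded analytic functions\<close>

lemma Hinf_iff: "Hinf f \<longleftrightarrow> Linf f \<and> (\<forall>n\<ge>1. (LINT t|circ. f t * cis t ^ n) = 0)"
  unfolding Hinf_def exp_of_nat_mult_eq_cis_power by simp

lemma Linf_Hinf: "Hinf f \<Longrightarrow> Linf f"
  unfolding Hinf_iff by blast

lemma Hinf_const: "Hinf (\<lambda>t. c)"
  by (simp add: Hinf_iff Linf_const integral_cis_power)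

lemma Hinf_integral_mult_poly_cis:
  assumes "Hinf h"
  shows "(LINT t|circ. h t * poly R (cis t)) = coeff R 0 * (LINT t|circ. h t)"
proof -
  have L: "Linf h" using assms by (rule Linf_Hinf)
  have "(LINT t|circ. h t * poly R (cis t)) = (LINT t|circ. (\<Sum>j\<le>degree R. coeff R j * (h t * cis t ^ j)))"
    by (simp add: poly_altdef sum_distrib_left algebra_simps)
  also have "\<dots> = (\<Sum>j\<le>degree R. coeff R j * (LINT t|circ. h t * cis t ^ j))"
    by (subst Bochner_Integration.integral_sum)
       (auto intro!: integrable_mult_right integrable_Linf_mult_cis_power L)
  also have "\<dots> = (\<Sum>j\<le>degree R. if j = 0 then coeff R 0 * (LINT t|circ. h t) else 0)"
    using assms unfolding Hinf_iff by (intro sum.cong) auto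
  also have "\<dots> = coeff R 0 * (LINT t|circ. h t)"
    by (simp add: sum.delta)
  finally show ?thesis .
qed

lemma integral_poly_cis: "(LINT t|circ. poly U (cis t)) = (2*pi) * coeff U 0"
  using Hinf_integral_mult_poly_cis[OF Hinf_const, of 1 U]
  by (simp add: measure_restrict_space scaleR_conv_of_real)

lemma Hinf_poly_cis: "Hinf (\<lambda>t. poly P (cis t))"
  unfolding Hinf_iff
proof (intro conjI allI impI)
  show "Linf (\<lambda>t. poly P (cis t))" by (rule Linf_poly_cis)
  fix n :: nat assume n: "n \<ge> 1"
  have "(LINT t|circ. poly P (cis t) * cis t ^ n) = (LINT t|circ. 1 * poly (P * monom 1 n) (cis t))"
    by (simp add: poly_monom)
  also have "\<dots> = coeff (P * monom 1 n) 0 * (LINT t|circ. 1)"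
    by (rule Hinf_integral_mult_poly_cis[OF Hinf_const])
  also have "coeff (P * monom 1 n) 0 = 0"
    using n by (simp add: coeff_mult_0 coeff_monom)
  finally show "(LINT t|circ. poly P (cis t) * cis t ^ n) = 0" by simp
qed

lemma Hinf_add: "Hinf f \<Longrightarrow> Hinf g \<Longrightarrow> Hinf (\<lambda>t. f t + g t)"
  unfolding Hinf_iff by (auto simp: Linf_add distrib_right integrable_Linf_mult_cis_power)

lemma Hinf_diff: "Hinf f \<Longrightarrow> Hinf g \<Longrightarrow> Hinf (\<lambda>t. f t - g t)"
  unfolding Hinf_iff by (auto simp: Linf_diff left_diff_distrib integrable_Linf_mult_cis_power)

definition trig_poly :: "nat \<Rightarrow> complex poly \<Rightarrow> real \<Rightarrow> complex" where
  "trig_poly N P t = cis (- (real N * t)) * poly P (cis t)"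

definition is_trig_poly :: "(real \<Rightarrow> complex) \<Rightarrow> bool" where
  "is_trig_poly f \<longleftrightarrow> (\<exists>N P. f = trig_poly N P)"

lemma trig_poly_eq_sum:
  "trig_poly N P t = (\<Sum>k\<le>degree P. coeff P k * cis ((real k - real N) * t))"
proof -
  have "trig_poly N P t = (\<Sum>k\<le>degree P. cis (- (real N * t)) * (coeff P k * cis t ^ k))"
    by (simp add: trig_poly_def poly_altdef sum_distrib_left)
  also have "\<dots> = (\<Sum>k\<le>degree P. coeff P k * cis ((real k - real N) * t))"
    by (intro sum.cong refl) (simp add: Complex.DeMoivre cis_mult algebra_simps)
  finally show ?thesis .
qed

lemma cis_neg_mult_cis_power: "cis (- (real N * t)) * cis t ^ N = 1"
  by (simp add: Complex.DeMoivre cis_mult)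

lemma is_trig_poly_const: "is_trig_poly (\<lambda>t. c)"
  unfolding is_trig_poly_def by (intro exI[of _ 0] exI[of _ "[:c:]"]) (auto simp: trig_poly_def)

lemma is_trig_poly_add:
  assumes "is_trig_poly f" "is_trig_poly g"
  shows "is_trig_poly (\<lambda>t. f t + g t)"
proof -
  obtain N P M Q where f: "f = trig_poly N P" and g: "g = trig_poly M Q"
    using assms unfolding is_trig_poly_def by blast
  have "(\<lambda>t. f t + g t) = trig_poly (N + M) (P * monom 1 M + Q * monom 1 N)"
  proof
    fix t
    have "cis (- (real (N + M) * t)) = cis (- (real N * t)) * cis (- (real M * t))"
      by (simp add: cis_mult algebra_simps)
    then show "f t + g t = trig_poly (N + M) (P * monom 1 M + Q * monom 1 N) t"
      unfolding f g trig_poly_def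
      using cis_neg_mult_cis_power[of M t] cis_neg_mult_cis_power[of N t]
      by (simp add: poly_monom algebra_simps)
  qed
  then show ?thesis unfolding is_trig_poly_def by blast
qed

lemma is_trig_poly_mult:
  assumes "is_trig_poly f" "is_trig_poly g"
  shows "is_trig_poly (\<lambda>t. f t * g t)"
proof -
  obtain N P M Q where f: "f = trig_poly N P" and g: "g = trig_poly M Q"
    using assms unfolding is_trig_poly_def by blast
  have "(\<lambda>t. f t * g t) = trig_poly (N + M) (P * Q)"
  proof
    fix t
    have "cis (- (real (N + M) * t)) = cis (- (real N * t)) * cis (- (real M * t))"
      by (simp add: cis_mult algebra_simps)
    then show "f t * g t = trig_poly (N + M) (P * Q) t"
      unfolding f g trig_poly_def by (simp add: algebra_simps)
  qed
  then show ?thesis unfolding is_trig_poly_def by blast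
qed

lemma is_trig_poly_cos: "is_trig_poly (\<lambda>t. of_real (cos t))"
proof -
  have "of_real (cos t) = trig_poly 1 [:1/2, 0, 1/2:] t" for t
  proof -
    have "cis (- t) * (1/2 + cis t * cis t / 2) = (cis (- t) + cis t) / 2"
      by (simp add: algebra_simps cis_mult)
    also have "\<dots> = of_real (cos t)"
      by (simp add: cis.ctr complex_eq_iff)
    finally show ?thesis by (simp add: trig_poly_def algebra_simps)
  qed
  then show ?thesis unfolding is_trig_poly_def by blast
qed

lemma is_trig_poly_sin: "is_trig_poly (\<lambda>t. of_real (sin t))"
proof -
  have "of_real (sin t) = trig_poly 1 [:-1/(2*\<i>), 0, 1/(2*\<i>):] t" for t
  proof -
    have "cis (- t) * (-1/(2*\<i>) + cis t * cis t / (2*\<i>)) = (cis t - cis (- t)) / (2*\<i>)"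
      by (simp add: algebra_simps cis_mult diff_divide_distrib)
    also have "\<dots> = of_real (sin t)"
      by (simp add: cis.ctr complex_eq_iff)
    finally show ?thesis by (simp add: trig_poly_def algebra_simps)
  qed
  then show ?thesis unfolding is_trig_poly_def by blast
qed

lemma is_trig_poly_real_polynomial_function:
  fixes q :: "complex \<Rightarrow> real"
  assumes "real_polynomial_function q"
  shows "is_trig_poly (\<lambda>t. of_real (q (cis t)))"
  using assms
proof induction
  case (linear f)
  then have "linear f" using bounded_linear.linear by blast
  have "f (cis t) = cos t * f 1 + sin t * f \<i>" for t
  proof -
    have "cis t = cos t *\<^sub>R 1 + sin t *\<^sub>R \<i>" by (simp add: complex_eq_iff)
    then have "f (cis t) = f (cos t *\<^sub>R 1 + sin t *\<^sub>R \<i>)" by simp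
    then show ?thesis using \<open>linear f\<close> by (simp add: linear_add linear_scale)
  qed
  then have "(\<lambda>t. of_real (f (cis t)) :: complex)
             = (\<lambda>t. of_real (cos t) * of_real (f 1) + of_real (sin t) * of_real (f \<i>))"
    by simp
  moreover have "is_trig_poly (\<lambda>t. of_real (cos t) * of_real (f 1) + of_real (sin t) * of_real (f \<i>))"
    by (intro is_trig_poly_add is_trig_poly_mult is_trig_poly_const is_trig_poly_cos is_trig_poly_sin)
  ultimately show ?case by simp
next
  case (const c)
  show ?case by (rule is_trig_poly_const)
next
  case (add f g)
  then show ?case unfolding of_real_add by (intro is_trig_poly_add)
next
  case (mult f g)
  then show ?case unfolding of_real_mult by (intro is_trig_poly_mult)
qed

lemma is_trig_poly_polynomial_function:
  fixes q :: "complex \<Rightarrow> complex"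
  assumes "polynomial_function q"
  shows "is_trig_poly (\<lambda>t. q (cis t))"
proof -
  have "real_polynomial_function (Re \<circ> q)" "real_polynomial_function (Im \<circ> q)"
    using assms bounded_linear_Re bounded_linear_Im unfolding polynomial_function_def by blast+
  then have "is_trig_poly (\<lambda>t. of_real (Re (q (cis t))) + \<i> * of_real (Im (q (cis t))))"
    using is_trig_poly_real_polynomial_function[of "Re \<circ> q"] is_trig_poly_real_polynomial_function[of "Im \<circ> q"]
    by (intro is_trig_poly_add is_trig_poly_mult is_trig_poly_const) auto
  moreover have "(\<lambda>t. of_real (Re (q (cis t))) + \<i> * of_real (Im (q (cis t)))) = (\<lambda>t. q (cis t))"
    by (rule ext) (rule complex_eq[symmetric])
  ultimately show ?thesis by simp
qed

lemma continuous_on_is_trig_poly: "is_trig_poly f \<Longrightarrow> continuous_on S f"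
  unfolding is_trig_poly_def trig_poly_def by (auto intro!: continuous_intros)

lemma is_trig_poly_split_analytic:
  assumes "is_trig_poly p"
  obtains Q R where "\<And>t. p t = poly Q (cis t) + cnj (poly R (cis t))" "coeff R 0 = 0"
proof -
  obtain N P where p: "p = trig_poly N P" using assms unfolding is_trig_poly_def by blast
  define K where "K = {..degree P}"
  define Q where "Q = (\<Sum>k\<in>{k\<in>K. N \<le> k}. monom (coeff P k) (k - N))"
  define R where "R = (\<Sum>k\<in>{k\<in>K. \<not> N \<le> k}. monom (cnj (coeff P k)) (N - k))"
  have "p t = poly Q (cis t) + cnj (poly R (cis t))" for t
  proof -
    let ?c = "\<lambda>k. coeff P k * cis ((real k - real N) * t)"
    have q: "poly Q (cis t) = (\<Sum>k\<in>K. if N \<le> k then ?c k else 0)"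
      unfolding Q_def poly_sum poly_monom
      by (subst sum.inter_filter[symmetric])
         (auto simp: K_def Complex.DeMoivre of_nat_diff intro!: sum.cong)
    have r: "cnj (poly R (cis t)) = (\<Sum>k\<in>K. if \<not> N \<le> k then ?c k else 0)"
      unfolding R_def poly_sum poly_monom cnj_sum
      by (subst sum.inter_filter[symmetric])
         (auto simp: K_def Complex.DeMoivre of_nat_diff cis_cnj algebra_simps intro!: sum.cong)
    have "p t = (\<Sum>k\<in>K. (if N \<le> k then ?c k else 0) + (if \<not> N \<le> k then ?c k else 0))"
      unfolding p trig_poly_eq_sum K_def by (intro sum.cong) auto
    then show ?thesis
      unfolding q r sum.distrib .
  qed
  moreover have "coeff R 0 = 0"
    unfolding R_def coeff_sum by (intro sum.neutral) (auto simp: coeff_monom)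
  ultimately show ?thesis using that by blast
qed

section \<open>Approximation by trigonometric polynomials\<close>

lemma cis_image_interval: "cis ` {0..2*pi} = sphere 0 1"
proof
  show "cis ` {0..2*pi} \<subseteq> sphere 0 1" by auto
  show "sphere 0 1 \<subseteq> cis ` {0..2*pi}"
  proof
    fix z :: complex assume "z \<in> sphere 0 1"
    then have "z = cis (Arg2pi z)" using Arg2pi_eq[of z] by (simp add: cis_conv_exp)
    moreover have "Arg2pi z \<in> {0..2*pi}" using Arg2pi_ge_0 Arg2pi_lt_2pi less_imp_le by auto
    ultimately show "z \<in> cis ` {0..2*pi}" by blast
  qed
qed

text \<open>A continuous function on \<open>[0, 2\<pi>]\<close> with equal endpoint values factors continuously
  through \<open>cis\<close>, a quotient map onto the unit circle, where Stone-Weierstrass applies.\<close>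

lemma trig_poly_approx_periodic:
  assumes k: "continuous_on {0..2*pi} k" and per: "k 0 = k (2*pi)" and e: "e > 0"
  shows "\<exists>p. is_trig_poly p \<and> (\<forall>t\<in>{0..2*pi}. cmod (k t - p t) < e)"
proof -
  define K where "K z = k (Arg2pi z)" for z
  have KC: "K (cis t) = k t" if "t \<in> {0..2*pi}" for t
  proof (cases "t = 2*pi")
    case True
    then show ?thesis using per Arg2pi_of_real[of 1] by (simp add: K_def)
  next
    case False
    then have "Arg2pi (cis t) = t"
      using that by (intro Arg2pi_unique[of 1]) (auto simp: cis_conv_exp)
    then show ?thesis by (simp add: K_def)
  qed
  have q: "quotient_map (top_of_set {0..2*pi}) (top_of_set (sphere 0 1)) cis"
  proof (rule continuous_imp_quotient_map)
    show "continuous_map (top_of_set {0..2*pi}) (top_of_set (sphere 0 (1::real))) cis"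
      unfolding continuous_map_subtopology_eu by (auto simp: continuous_on_cis continuous_on_id)
    show "compact_space (top_of_set {0..2*pi::real})"
      by (rule compact_space_subtopology) (simp add: compactin_euclidean_iff)
    show "Hausdorff_space (top_of_set (sphere (0::complex) 1))"
      by (rule Hausdorff_space_subtopology[OF Hausdorff_space_euclidean])
    show "cis ` topspace (top_of_set {0..2*pi}) = topspace (top_of_set (sphere 0 1))"
      using cis_image_interval by simp
  qed
  have "continuous_map (top_of_set {0..2*pi}) euclidean (K \<circ> cis)"
    unfolding continuous_map_iff_continuous by (rule continuous_on_eq[OF k]) (simp add: KC)
  then have "continuous_map (top_of_set (sphere 0 1)) euclidean K"
    by (rule continuous_compose_quotient_map[OF q])
  then have "continuous_on (sphere 0 1) K"
    unfolding continuous_map_iff_continuous .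
  then obtain g where g: "polynomial_function g" "\<And>z. z \<in> sphere 0 1 \<Longrightarrow> norm (K z - g z) < e"
    using Stone_Weierstrass_polynomial_function[OF compact_sphere _ e] by metis
  have "cmod (k t - g (cis t)) < e" if "t \<in> {0..2*pi}" for t
    using g(2)[of "cis t"] KC[OF that] by simp
  with is_trig_poly_polynomial_function[OF g(1)] show ?thesis by blast
qed

definition clip :: "real \<Rightarrow> complex \<Rightarrow> complex" where
  "clip B z = of_real (max (-B) (min B (Re z))) + \<i> * of_real (max (-B) (min B (Im z)))"

lemma clip_eq_self: "cmod z \<le> B \<Longrightarrow> clip B z = z"
  using abs_Re_le_cmod[of z] abs_Im_le_cmod[of z] by (auto simp: clip_def complex_eq_iff)

lemma norm_clip_le:
  assumes "B \<ge> 0"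
  shows "cmod (clip B z) \<le> 2 * B"
proof -
  have "cmod (clip B z) \<le> \<bar>max (-B) (min B (Re z))\<bar> + \<bar>max (-B) (min B (Im z))\<bar>"
    unfolding clip_def by (rule order_trans[OF norm_triangle_ineq]) (simp add: norm_mult)
  also have "\<dots> \<le> 2 * B" using assms by auto
  finally show ?thesis .
qed

lemma continuous_on_clip: "continuous_on S g \<Longrightarrow> continuous_on S (\<lambda>x. clip B (g x))"
  unfolding clip_def by (intro continuous_intros continuous_on_max continuous_on_min) auto

lemma tendsto_clip: "(g \<longlongrightarrow> z) F \<Longrightarrow> ((\<lambda>x. clip B (g x)) \<longlongrightarrow> clip B z) F"
  unfolding clip_def by (intro tendsto_intros tendsto_max tendsto_min) auto

definition cutoff :: "nat \<Rightarrow> real \<Rightarrow> real" where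
  "cutoff j t = min 1 (max 0 (real (Suc j) * min t (2*pi - t)))"

lemma continuous_on_cutoff: "continuous_on S (cutoff j)"
  unfolding cutoff_def by (intro continuous_intros continuous_on_max continuous_on_min)

lemma cutoff_tendsto_1:
  assumes "0 < t" "t < 2*pi"
  shows "(\<lambda>j. cutoff j t) \<longlonglongrightarrow> 1"
proof (rule tendsto_eventually)
  define m where "m = min t (2*pi - t)"
  have m: "m > 0" using assms by (auto simp: m_def)
  obtain J :: nat where J: "1 / m < J" using reals_Archimedean2 by blast
  show "eventually (\<lambda>j. cutoff j t = 1) sequentially"
    unfolding eventually_sequentially
  proof (intro exI allI impI)
    fix j assume "J \<le> j"
    then have "1 / m < real (Suc j)" using J by linarith
    then have "1 < real (Suc j) * m" using m by (simp add: field_simps)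
    then show "cutoff j t = 1" by (simp add: cutoff_def m_def[symmetric])
  qed
qed

lemma AE_circ_not_in_negligible:
  assumes "negligible S"
  shows "AE t in circ. t \<notin> S"
proof (rule AE_I')
  show "S \<inter> {0..2*pi} \<in> null_sets circ"
    using negligible_subset[OF assms, of "S \<inter> {0..2*pi}"]
    by (subst null_sets_restrict_space) (auto simp: negligible_iff_null_sets)
qed auto

lemma Linf_limit_of_continuous_periodic:
  assumes "Linf f"
  obtains k B where "\<And>j. continuous_on {0..2*pi} (k j)" "\<And>j. k j 0 = k j (2*pi)"
    "\<And>j t. cmod (k j t) \<le> B" "AE t in circ. (\<lambda>j. k j t) \<longlonglongrightarrow> f t"
proof -
  obtain B where B: "B \<ge> 0" "AE t in circ. cmod (f t) \<le> B" using Linf_bound[OF assms] .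
  have "f measurable_on {0..2*pi}"
    using borel_measurable_Linf[OF assms] by (subst measurable_on_iff_borel_measurable) auto
  then obtain N g where N: "negligible N" and g: "\<And>n. continuous_on UNIV (g n)"
    and g_lim: "\<And>t. t \<notin> N \<Longrightarrow> (\<lambda>n. g n t) \<longlonglongrightarrow> (if t \<in> {0..2*pi} then f t else 0)"
    unfolding measurable_on_def by blast
  define k where "k j t = of_real (cutoff j t) * clip B (g j t)" for j t
  show ?thesis
  proof
    show "continuous_on {0..2*pi} (k j)" for j
      unfolding k_def
      by (intro continuous_intros continuous_on_cutoff continuous_on_clip continuous_on_subset[OF g]) auto
    show "k j 0 = k j (2*pi)" for j
      by (simp add: k_def cutoff_def)
    show "cmod (k j t) \<le> 2 * B" for j t
    proof -
      have "cmod (k j t) = \<bar>cutoff j t\<bar> * cmod (clip B (g j t))" by (simp add: k_def norm_mult)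
      also have "\<dots> \<le> 1 * (2 * B)"
        using norm_clip_le[OF B(1)] by (intro mult_mono) (auto simp: cutoff_def)
      finally show ?thesis by simp
    qed
    have "AE t in circ. t \<notin> N \<and> t \<notin> {0, 2*pi}"
      using AE_circ_not_in_negligible[OF N] AE_circ_not_in_negligible[OF negligible_finite[of "{0, 2*pi}"]]
      by auto
    then show "AE t in circ. (\<lambda>j. k j t) \<longlonglongrightarrow> f t"
      using B(2) AE_space[of circ]
    proof eventually_elim
      case (elim t)
      then have t: "0 < t" "t < 2*pi" "t \<in> {0..2*pi}" by auto
      have "(\<lambda>j. clip B (g j t)) \<longlonglongrightarrow> clip B (f t)"
        using g_lim[of t] elim t by (auto intro: tendsto_clip)
      then have "(\<lambda>j. clip B (g j t)) \<longlonglongrightarrow> f t" using clip_eq_self elim by simp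
      then show ?case
        using tendsto_mult[OF tendsto_of_real[OF cutoff_tendsto_1[OF t(1,2)]]] by (simp add: k_def)
    qed
  qed
qed

lemma Linf_limit_of_trig_poly:
  assumes "Linf f"
  obtains p C where "\<And>j. is_trig_poly (p j)" "\<And>j. AE t in circ. cmod (p j t) \<le> C"
    "AE t in circ. (\<lambda>j. p j t) \<longlonglongrightarrow> f t"
proof -
  obtain k B where k: "\<And>j. continuous_on {0..2*pi} (k j)" "\<And>j. k j 0 = k j (2*pi)"
    and k_bound: "\<And>j t. cmod (k j t) \<le> B" and k_lim: "AE t in circ. (\<lambda>j. k j t) \<longlonglongrightarrow> f t"
    using Linf_limit_of_continuous_periodic[OF assms] by blast
  have "\<forall>j. \<exists>p. is_trig_poly p \<and> (\<forall>t\<in>{0..2*pi}. cmod (k j t - p t) < inverse (real (Suc j)))"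
    using trig_poly_approx_periodic[OF k] by simp
  then obtain p where p: "\<And>j. is_trig_poly (p j)"
    and p_close: "\<And>j t. t \<in> {0..2*pi} \<Longrightarrow> cmod (k j t - p j t) < inverse (real (Suc j))"
    by metis
  show ?thesis
  proof
    show "is_trig_poly (p j)" for j by (rule p)
    show "AE t in circ. cmod (p j t) \<le> B + 1" for j
    proof (rule AE_I2)
      fix t assume "t \<in> space circ"
      then have "cmod (k j t - p j t) \<le> 1"
        using p_close[of t j] inverse_le_1_iff[of "real (Suc j)"] by simp
      then show "cmod (p j t) \<le> B + 1"
        using k_bound[of j t] norm_triangle_ineq3[of "p j t" "k j t"] by (simp add: norm_minus_commute)
    qed
    show "AE t in circ. (\<lambda>j. p j t) \<longlonglongrightarrow> f t"
      using k_lim AE_space[of circ]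
    proof eventually_elim
      case (elim t)
      have "\<forall>\<^sub>F j in sequentially. cmod (k j t - p j t) \<le> inverse (real (Suc j))"
        using p_close[of t] elim by (intro always_eventually allI less_imp_le) auto
      then have "(\<lambda>j. k j t - p j t) \<longlonglongrightarrow> 0"
        by (rule Lim_null_comparison[OF _ LIMSEQ_inverse_real_of_nat])
      from tendsto_diff[OF elim(1) this] show ?case by simp
    qed
  qed
qed

lemma integral_mult_cnj_trig_poly_eq_0:
  assumes L: "Linf g" and coeffs: "\<And>m::int. (LINT t|circ. g t * cis (of_int m * t)) = 0"
    and p: "is_trig_poly p"
  shows "(LINT t|circ. g t * cnj (p t)) = 0"
proof -
  obtain N P where p: "p = trig_poly N P" using p unfolding is_trig_poly_def by blast
  have "(LINT t|circ. g t * cnj (p t)) =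
        (LINT t|circ. (\<Sum>k\<le>degree P. cnj (coeff P k) * (g t * cis (of_int (int N - int k) * t))))"
    by (simp add: p trig_poly_eq_sum cnj_sum cis_cnj sum_distrib_left algebra_simps)
  also have "\<dots> = (\<Sum>k\<le>degree P. cnj (coeff P k) * (LINT t|circ. g t * cis (of_int (int N - int k) * t)))"
    by (subst Bochner_Integration.integral_sum)
       (auto intro!: integrable_mult_right integrable_Linf[OF Linf_mult[OF L Linf_continuous]] continuous_intros)
  also have "\<dots> = 0"
    using coeffs[of "int N - int k" for k] by simp
  finally show ?thesis .
qed

lemma Linf_AE_zero_if_Fourier_coeffs_zero:
  assumes L: "Linf g" and coeffs: "\<And>m::int. (LINT t|circ. g t * cis (of_int m * t)) = 0"
  shows "AE t in circ. g t = 0"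
proof -
  obtain p C where p: "\<And>j. is_trig_poly (p j)" and p_bound: "\<And>j. AE t in circ. cmod (p j t) \<le> C"
    and p_lim: "AE t in circ. (\<lambda>j. p j t) \<longlonglongrightarrow> g t"
    using Linf_limit_of_trig_poly[OF L] by blast
  obtain B where B: "B \<ge> 0" "AE t in circ. cmod (g t) \<le> B" using Linf_bound[OF L] .
  have orth: "(LINT t|circ. g t * cnj (p j t)) = 0" for j
    by (rule integral_mult_cnj_trig_poly_eq_0[OF L coeffs p])
  have "(\<lambda>j. LINT t|circ. g t * cnj (p j t)) \<longlonglongrightarrow> (LINT t|circ. g t * cnj (g t))"
  proof (rule circ.integral_bounded_convergence[where C="B * C"])
    show "(\<lambda>t. g t * cnj (g t)) \<in> borel_measurable circ"
      using borel_measurable_Linf[OF L] by (intro borel_measurable_times borel_measurable_cnj)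
    show "(\<lambda>t. g t * cnj (p j t)) \<in> borel_measurable circ" for j
      by (intro borel_measurable_times borel_measurable_Linf[OF L] borel_measurable_cnj
          borel_measurable_continuous_on_circ continuous_on_is_trig_poly[OF p])
    show "AE t in circ. (\<lambda>j. g t * cnj (p j t)) \<longlonglongrightarrow> g t * cnj (g t)"
      using p_lim by eventually_elim (intro tendsto_intros)
    show "AE t in circ. norm (g t * cnj (p j t)) \<le> B * C" for j
      using B(2) p_bound[of j] by eventually_elim (simp add: norm_mult mult_mono')
  qed
  then have "(LINT t|circ. g t * cnj (g t)) = 0"
    using orth by (simp add: LIMSEQ_const_iff)
  then have "(LINT t|circ. (cmod (g t))^2) = 0"
    unfolding complex_norm_square[symmetric] of_real_power[symmetric] integral_complex_of_real
    by simp
  then have "AE t in circ. (cmod (g t))^2 = 0"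
    using integral_nonneg_eq_0_iff_AE[OF integrable_Linf_norm_square[OF L]] by simp
  then show ?thesis by simp
qed

section \<open>Products of bounded analytic functions\<close>

lemma Hinf_integral_norm_square_le_add_cnj_poly:
  assumes h: "Hinf h" and R: "coeff R 0 = 0"
  shows "(LINT t|circ. (cmod (h t))^2) \<le> (LINT t|circ. (cmod (h t + cnj (poly R (cis t))))^2)"
proof -
  define r where "r t = cnj (poly R (cis t))" for t
  have Lh: "Linf h" using h by (rule Linf_Hinf)
  have Lr: "Linf r" unfolding r_def by (rule Linf_continuous) (intro continuous_intros)
  define c where "c t = 2 * Re (h t * cnj (r t))" for t
  have int_c: "integrable circ c"
    unfolding c_def r_def
    by (intro integrable_mult_right integrable_Re) (simp add: integrable_Linf Linf_mult Lh Linf_poly_cis)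
  have "(LINT t|circ. c t) = 2 * Re (LINT t|circ. h t * poly R (cis t))"
    unfolding c_def r_def complex_cnj_cnj integral_mult_right_zero
    by (simp only: integral_Re[OF integrable_Linf[OF Linf_mult[OF Lh Linf_poly_cis]]])
  also have "\<dots> = 0"
    using Hinf_integral_mult_poly_cis[OF h, of R] R by simp
  finally have "(LINT t|circ. c t) = 0" .
  moreover have "(cmod (h t + r t))^2 = (cmod (h t))^2 + (cmod (r t))^2 + c t" for t
    unfolding c_def by (simp only: cmod_power2) (simp add: power2_sum algebra_simps)
  moreover have "(LINT t|circ. (cmod (r t))^2) \<ge> 0"
    by (rule integral_nonneg_AE) simp
  ultimately show ?thesis
    using integrable_Linf_norm_square[OF Lh] integrable_Linf_norm_square[OF Lr] int_c
    by (simp add: r_def)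
qed

lemma Linf_integral_norm_square_diff_tendsto_0:
  assumes Lf: "Linf f" and p: "\<And>j. p j \<in> borel_measurable circ"
    and p_bound: "\<And>j. AE t in circ. cmod (p j t) \<le> C" and p_lim: "AE t in circ. (\<lambda>j. p j t) \<longlonglongrightarrow> f t"
  shows "(\<lambda>j. LINT t|circ. (cmod (p j t - f t))^2) \<longlonglongrightarrow> 0"
proof -
  obtain Bf where Bf: "AE t in circ. cmod (f t) \<le> Bf" using Linf_bound[OF Lf] by blast
  have "(\<lambda>j. LINT t|circ. (cmod (p j t - f t))^2) \<longlonglongrightarrow> (LINT t|circ. 0)"
  proof (rule circ.integral_bounded_convergence[where C="(C + Bf)^2"])
    show "(\<lambda>t. (cmod (p j t - f t))^2) \<in> borel_measurable circ" for j
      using borel_measurable_Linf[OF Lf] p[of j] by measurable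
    show "AE t in circ. (\<lambda>j. (cmod (p j t - f t))^2) \<longlonglongrightarrow> 0"
      using p_lim by eventually_elim (auto intro!: tendsto_eq_intros simp: LIM_zero_iff)
    show "AE t in circ. norm ((cmod (p j t - f t))^2) \<le> (C + Bf)^2" for j
      using p_bound[of j] Bf
    proof eventually_elim
      case (elim t)
      then have "cmod (p j t - f t) \<le> C + Bf"
        using norm_triangle_ineq4[of "p j t" "f t"] by linarith
      then show ?case by (simp add: power_mono)
    qed
  qed simp
  then show ?thesis by simp
qed

lemma Hinf_L2_limit_of_poly_cis:
  assumes f: "Hinf f"
  obtains Q where "(\<lambda>j. LINT t|circ. (cmod (poly (Q j) (cis t) - f t))^2) \<longlonglongrightarrow> 0"
proof -
  have Lf: "Linf f" using f by (rule Linf_Hinf)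
  obtain p C where p: "\<And>j. is_trig_poly (p j)" and p_bound: "\<And>j. AE t in circ. cmod (p j t) \<le> C"
    and p_lim: "AE t in circ. (\<lambda>j. p j t) \<longlonglongrightarrow> f t"
    using Linf_limit_of_trig_poly[OF Lf] by blast
  have "\<exists>Q R. (\<forall>t. p j t = poly Q (cis t) + cnj (poly R (cis t))) \<and> coeff R 0 = 0" for j
  proof (rule is_trig_poly_split_analytic[OF p[of j]])
    fix Q R assume "\<And>t. p j t = poly Q (cis t) + cnj (poly R (cis t))" "coeff R 0 = 0"
    then show ?thesis by (intro exI[of _ Q] exI[of _ R]) simp
  qed
  then obtain Q R where QR: "\<And>j t. p j t = poly (Q j) (cis t) + cnj (poly (R j) (cis t))"
    "\<And>j. coeff (R j) 0 = 0"
    by metis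
  have closer: "(LINT t|circ. (cmod (poly (Q j) (cis t) - f t))^2) \<le> (LINT t|circ. (cmod (p j t - f t))^2)" for j
    using Hinf_integral_norm_square_le_add_cnj_poly[OF Hinf_diff[OF Hinf_poly_cis f] QR(2)]
    by (simp add: QR(1) algebra_simps)
  have lim: "(\<lambda>j. LINT t|circ. (cmod (p j t - f t))^2) \<longlonglongrightarrow> 0"
    using p_bound p_lim continuous_on_is_trig_poly[OF p]
    by (intro Linf_integral_norm_square_diff_tendsto_0 Lf borel_measurable_continuous_on_circ)
  have nonneg: "\<forall>\<^sub>F j in sequentially. 0 \<le> (LINT t|circ. (cmod (poly (Q j) (cis t) - f t))^2)"
    by (intro always_eventually allI integral_nonneg_AE) simp
  have "\<forall>\<^sub>F j in sequentially.
      (LINT t|circ. (cmod (poly (Q j) (cis t) - f t))^2) \<le> (LINT t|circ. (cmod (p j t - f t))^2)"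
    by (intro always_eventually allI closer)
  from real_tendsto_sandwich[OF nonneg this tendsto_const lim] show ?thesis
    by (rule that)
qed

lemma Hinf_Fourier_coeff_mult_le:
  assumes g: "Hinf g" and Lf: "Linf f" and n: "n \<ge> 1" and Bg: "AE t in circ. cmod (g t) \<le> Bg"
  shows "cmod (LINT t|circ. f t * g t * cis t ^ n) \<le> Bg * (LINT t|circ. cmod (poly Q (cis t) - f t))"
proof -
  have Lg: "Linf g" using g by (rule Linf_Hinf)
  have "(LINT t|circ. poly Q (cis t) * g t * cis t ^ n) = 0"
    using Hinf_integral_mult_poly_cis[OF g, of "Q * monom 1 n"] n
    by (simp add: poly_monom coeff_mult_0 coeff_monom algebra_simps)
  then have "(LINT t|circ. f t * g t * cis t ^ n)
      = (LINT t|circ. f t * g t * cis t ^ n) - (LINT t|circ. poly Q (cis t) * g t * cis t ^ n)"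
    by simp
  also have "\<dots> = (LINT t|circ. f t * g t * cis t ^ n - poly Q (cis t) * g t * cis t ^ n)"
    by (rule Bochner_Integration.integral_diff[symmetric])
       (intro integrable_Linf_mult_cis_power Linf_mult Lf Lg Linf_poly_cis)+
  also have "\<dots> = (LINT t|circ. (f t - poly Q (cis t)) * (g t * cis t ^ n))"
    by (simp add: left_diff_distrib mult.assoc)
  also have "cmod \<dots> \<le> (LINT t|circ. cmod ((f t - poly Q (cis t)) * (g t * cis t ^ n)))"
    by (rule integral_norm_bound)
  also have "\<dots> \<le> (LINT t|circ. Bg * cmod (poly Q (cis t) - f t))"
  proof (rule integral_mono_AE)
    show "integrable circ (\<lambda>t. cmod ((f t - poly Q (cis t)) * (g t * cis t ^ n)))"
      by (intro integrable_norm integrable_Linf Linf_mult Linf_diff Lf Lg Linf_poly_cis Linf_cis_power)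
    show "integrable circ (\<lambda>t. Bg * cmod (poly Q (cis t) - f t))"
      by (intro integrable_mult_right integrable_norm integrable_Linf Linf_diff Linf_poly_cis Lf)
    show "AE t in circ. cmod ((f t - poly Q (cis t)) * (g t * cis t ^ n)) \<le> Bg * cmod (poly Q (cis t) - f t)"
      using Bg by eventually_elim
        (simp add: norm_mult norm_power norm_minus_commute mult.commute[of Bg] mult_left_mono)
  qed
  finally show ?thesis by simp
qed

lemma Hinf_mult:
  assumes f: "Hinf f" and g: "Hinf g"
  shows "Hinf (\<lambda>t. f t * g t)"
  unfolding Hinf_iff
proof (intro conjI allI impI)
  have Lf: "Linf f" and Lg: "Linf g" using f g by (auto intro: Linf_Hinf)
  show "Linf (\<lambda>t. f t * g t)" by (rule Linf_mult[OF Lf Lg])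
  fix n :: nat assume n: "n \<ge> 1"
  obtain Bg where Bg: "AE t in circ. cmod (g t) \<le> Bg" using Linf_bound[OF Lg] by blast
  obtain Q where Q: "(\<lambda>j. LINT t|circ. (cmod (poly (Q j) (cis t) - f t))^2) \<longlonglongrightarrow> 0"
    using Hinf_L2_limit_of_poly_cis[OF f] .
  have Lu: "Linf (\<lambda>t. poly (Q j) (cis t) - f t)" for j
    by (intro Linf_diff Linf_poly_cis Lf)
  have "(\<lambda>j. LINT t|circ. \<bar>cmod (poly (Q j) (cis t) - f t)\<bar>) \<longlonglongrightarrow> 0"
    using Q borel_measurable_Linf[OF Lu] integrable_Linf_norm_square[OF Lu]
    by (intro circ.integral_abs_tendsto_0_if_integral_square_tendsto_0) auto
  then have "(\<lambda>j. Bg * (LINT t|circ. cmod (poly (Q j) (cis t) - f t))) \<longlonglongrightarrow> 0"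
    using tendsto_mult[OF tendsto_const, of _ 0 sequentially Bg] by simp
  then have "cmod (LINT t|circ. f t * g t * cis t ^ n) \<le> 0"
    using Hinf_Fourier_coeff_mult_le[OF g Lf n Bg] by (intro LIMSEQ_le_const) auto
  then show "(LINT t|circ. f t * g t * cis t ^ n) = 0" by simp
qed

section \<open>Zeros of bounded analytic functions\<close>

lemma norm_exp_partial_sum_le:
  fixes z :: "'a::{real_normed_algebra_1, banach}"
  shows "norm (\<Sum>k<N. z^k /\<^sub>R fact k) \<le> exp (norm z)"
proof -
  have "norm (\<Sum>k<N. z^k /\<^sub>R fact k) \<le> (\<Sum>k<N. norm z ^ k /\<^sub>R fact k)"
    by (rule order_trans[OF norm_sum]) (auto intro!: sum_mono divide_right_mono simp: norm_power_ineq)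
  also have "\<dots> \<le> exp (norm z)"
    unfolding sums_unique[OF exp_converges] by (rule sum_le_suminf[OF summable_exp_generic]) auto
  finally show ?thesis .
qed

lemma Hinf_integral_mult_exp_poly_cis:
  assumes h: "Hinf h"
  shows "(LINT t|circ. h t * exp (poly U (cis t))) = exp (coeff U 0) * (LINT t|circ. h t)"
proof -
  have Lh: "Linf h" using h by (rule Linf_Hinf)
  obtain Bh where Bh: "Bh \<ge> 0" "AE t in circ. cmod (h t) \<le> Bh" using Linf_bound[OF Lh] .
  obtain Cu where Cu: "AE t in circ. cmod (poly U (cis t)) \<le> Cu"
    using Linf_bound[OF Linf_poly_cis] by blast
  define S where "S N = (\<Sum>k<N. smult (of_real (inverse (fact k))) (U ^ k))" for N
  have poly_S: "poly (S N) z = (\<Sum>k<N. poly U z ^ k /\<^sub>R fact k)" for N z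
    by (simp add: S_def poly_sum poly_power scaleR_conv_of_real)
  have coeff_S: "coeff (S N) 0 = (\<Sum>k<N. coeff U 0 ^ k /\<^sub>R fact k)" for N
    by (simp add: S_def coeff_sum coeff_0_power scaleR_conv_of_real)
  have "(\<lambda>N. LINT t|circ. h t * poly (S N) (cis t)) \<longlonglongrightarrow> (LINT t|circ. h t * exp (poly U (cis t)))"
  proof (rule circ.integral_bounded_convergence[where C="Bh * exp Cu"])
    have "continuous_on {0..2*pi} (\<lambda>t. exp (poly U (cis t)))"
      by (intro continuous_intros)
    then show "(\<lambda>t. h t * exp (poly U (cis t))) \<in> borel_measurable circ"
      by (intro borel_measurable_times borel_measurable_Linf Lh borel_measurable_continuous_on_circ)
    show "(\<lambda>t. h t * poly (S N) (cis t)) \<in> borel_measurable circ" for N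
      by (intro borel_measurable_Linf Linf_mult Lh Linf_poly_cis)
    show "AE t in circ. (\<lambda>N. h t * poly (S N) (cis t)) \<longlonglongrightarrow> h t * exp (poly U (cis t))"
      unfolding poly_S using exp_converges[of "poly U (cis _)", unfolded sums_def]
      by (intro AE_I2 tendsto_mult tendsto_const)
    show "AE t in circ. norm (h t * poly (S N) (cis t)) \<le> Bh * exp Cu" for N
      using Bh(2) Cu
    proof eventually_elim
      case (elim t)
      have "cmod (poly (S N) (cis t)) \<le> exp Cu"
        unfolding poly_S by (rule order_trans[OF norm_exp_partial_sum_le]) (simp add: elim)
      then show ?case
        using elim Bh(1) by (simp add: norm_mult mult_mono)
    qed
  qed
  moreover have "(\<lambda>N. LINT t|circ. h t * poly (S N) (cis t)) \<longlonglongrightarrow> exp (coeff U 0) * (LINT t|circ. h t)"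
    unfolding Hinf_integral_mult_poly_cis[OF h] coeff_S
    using exp_converges[of "coeff U 0", unfolded sums_def] by (intro tendsto_mult tendsto_const)
  ultimately show ?thesis by (rule LIMSEQ_unique)
qed

lemma Hinf_norm_integral_mult_exp_le:
  assumes "Hinf g"
  shows "cmod (LINT t|circ. g t) * exp (Re (coeff V 0))
           \<le> (LINT t|circ. cmod (g t) * exp (Re (poly V (cis t))))"
proof -
  have "cmod (LINT t|circ. g t) * exp (Re (coeff V 0)) = cmod (LINT t|circ. g t * exp (poly V (cis t)))"
    by (simp only: Hinf_integral_mult_exp_poly_cis[OF assms]) (simp add: norm_mult norm_exp_eq_Re)
  also have "\<dots> \<le> (LINT t|circ. cmod (g t * exp (poly V (cis t))))"
    by (rule integral_norm_bound)
  also have "\<dots> = (LINT t|circ. cmod (g t) * exp (Re (poly V (cis t))))"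
    by (simp add: norm_mult norm_exp_eq_Re)
  finally show ?thesis .
qed

lemma Linf_limit_of_Re_poly_cis:
  assumes "Linf f"
  obtains U C where "\<And>j. AE t in circ. \<bar>Re (poly (U j) (cis t))\<bar> \<le> C"
    "AE t in circ. (\<lambda>j. Re (poly (U j) (cis t))) \<longlonglongrightarrow> Re (f t)"
proof -
  obtain p C where p: "\<And>j. is_trig_poly (p j)" and p_bound: "\<And>j. AE t in circ. cmod (p j t) \<le> C"
    and p_lim: "AE t in circ. (\<lambda>j. p j t) \<longlonglongrightarrow> f t"
    using Linf_limit_of_trig_poly[OF assms] by blast
  have "\<exists>U. \<forall>t. Re (p j t) = Re (poly U (cis t))" for j
  proof (rule is_trig_poly_split_analytic[OF p[of j]])
    fix Q R assume "\<And>t. p j t = poly Q (cis t) + cnj (poly R (cis t))"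
    then show ?thesis by (intro exI[of _ "Q + R"]) simp
  qed
  then obtain U where U: "\<And>j t. Re (p j t) = Re (poly (U j) (cis t))"
    using choice[of "\<lambda>j U. \<forall>t. Re (p j t) = Re (poly U (cis t))"] by blast
  show ?thesis
  proof (rule that[of U C])
    show "AE t in circ. \<bar>Re (poly (U j) (cis t))\<bar> \<le> C" for j
      using p_bound[of j] by eventually_elim (simp add: U[symmetric] order_trans[OF abs_Re_le_cmod])
    show "AE t in circ. (\<lambda>j. Re (poly (U j) (cis t))) \<longlonglongrightarrow> Re (f t)"
      using p_lim by eventually_elim (simp add: U[symmetric] tendsto_Re)
  qed
qed

lemma indicator_limit_of_Re_poly_cis:
  assumes E: "E \<in> sets circ"
  obtains U C where "\<And>j. AE t in circ. \<bar>Re (poly (U j) (cis t))\<bar> \<le> C"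
    "AE t in circ. (\<lambda>j. Re (poly (U j) (cis t))) \<longlonglongrightarrow> indicator E t"
proof -
  have "Linf (\<lambda>t. indicator E t :: complex)"
    unfolding Linf_def using E by (auto intro!: AE_I2 exI[of _ 1] simp: indicator_def)
  then obtain U C where U_bound: "\<And>j. AE t in circ. \<bar>Re (poly (U j) (cis t))\<bar> \<le> C"
    and U_lim: "AE t in circ. (\<lambda>j. Re (poly (U j) (cis t))) \<longlonglongrightarrow> Re (indicator E t :: complex)"
    using Linf_limit_of_Re_poly_cis by blast
  have "AE t in circ. (\<lambda>j. Re (poly (U j) (cis t))) \<longlonglongrightarrow> indicator E t"
    using U_lim by eventually_elim (auto simp: indicator_def)
  with U_bound show ?thesis by (rule that)
qed

lemma integral_Re_poly_cis: "(LINT t|circ. Re (poly U (cis t))) = 2 * pi * Re (coeff U 0)"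
  using integral_Re[OF integrable_Linf[OF Linf_poly_cis]] integral_poly_cis[of U] by simp

lemma Linf_integral_norm_mult_exp_tendsto:
  assumes L: "Linf g" and M: "M \<ge> 0" and u: "\<And>j. u j \<in> borel_measurable circ" "v \<in> borel_measurable circ"
    and u_bound: "\<And>j. AE t in circ. \<bar>u j t\<bar> \<le> C" and u_lim: "AE t in circ. (\<lambda>j. u j t) \<longlonglongrightarrow> v t"
  shows "(\<lambda>j. LINT t|circ. cmod (g t) * exp (M * u j t)) \<longlonglongrightarrow> (LINT t|circ. cmod (g t) * exp (M * v t))"
proof -
  obtain Bg where Bg: "Bg \<ge> 0" "AE t in circ. cmod (g t) \<le> Bg" using Linf_bound[OF L] .
  have gm: "g \<in> borel_measurable circ" by (rule borel_measurable_Linf[OF L])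
  show ?thesis
  proof (rule circ.integral_bounded_convergence[where C="Bg * exp (M * C)"])
    show "(\<lambda>t. cmod (g t) * exp (M * v t)) \<in> borel_measurable circ"
      using gm u(2) by measurable
    show "(\<lambda>t. cmod (g t) * exp (M * u j t)) \<in> borel_measurable circ" for j
      using gm u(1)[of j] by measurable
    show "AE t in circ. (\<lambda>j. cmod (g t) * exp (M * u j t)) \<longlonglongrightarrow> cmod (g t) * exp (M * v t)"
      using u_lim by eventually_elim (intro tendsto_intros)
    show "AE t in circ. norm (cmod (g t) * exp (M * u j t)) \<le> Bg * exp (M * C)" for j
      using u_bound[of j] Bg(2)
    proof eventually_elim
      case (elim t)
      then have "exp (M * u j t) \<le> exp (M * C)" using M by (simp add: mult_left_mono)
      then show ?case using elim Bg(1) by (simp add: abs_mult mult_mono)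
    qed
  qed
qed

text \<open>A Jensen-type estimate: test \<open>g\<close> against \<open>exp (M u)\<close> with \<open>u\<close> the real part of an analytic
  polynomial approximating the indicator of the zero set of \<open>g\<close>.\<close>

lemma Hinf_norm_integral_mult_exp_measure_zeros_le:
  assumes g: "Hinf g" and M: "M \<ge> 0"
  shows "cmod (LINT t|circ. g t) * exp (M * measure circ {t \<in> space circ. g t = 0} / (2*pi))
           \<le> (LINT t|circ. cmod (g t))"
proof -
  define E where "E = {t \<in> space circ. g t = 0}"
  have L: "Linf g" using g by (rule Linf_Hinf)
  have gm: "g \<in> borel_measurable circ" by (rule borel_measurable_Linf[OF L])
  have E: "E \<in> sets circ" unfolding E_def using gm by measurable
  have E_in_interval: "E \<inter> {0..2*pi} = E" by (auto simp: E_def)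
  obtain U C where U_bound: "\<And>j. AE t in circ. \<bar>Re (poly (U j) (cis t))\<bar> \<le> C"
    and U_lim: "AE t in circ. (\<lambda>j. Re (poly (U j) (cis t))) \<longlonglongrightarrow> indicator E t"
    using indicator_limit_of_Re_poly_cis[OF E] by blast
  let ?u = "\<lambda>j t. Re (poly (U j) (cis t))"
  have U_meas: "?u j \<in> borel_measurable circ" for j
    using borel_measurable_Linf[OF Linf_poly_cis] by measurable
  have lower: "(\<lambda>j. cmod (LINT t|circ. g t) * exp (M * (LINT t|circ. ?u j t) / (2*pi)))
      \<longlonglongrightarrow> cmod (LINT t|circ. g t) * exp (M * measure circ E / (2*pi))"
  proof (intro tendsto_intros)
    have "(\<lambda>j. LINT t|circ. ?u j t) \<longlonglongrightarrow> (LINT t|circ. indicator E t)"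
      using E U_lim U_bound U_meas by (intro circ.integral_bounded_convergence[where C=C]) auto
    then show "(\<lambda>j. LINT t|circ. ?u j t) \<longlonglongrightarrow> measure circ E"
      using E circ.emeasure_finite[of E] by (simp add: E_in_interval)
  qed simp
  have "(\<lambda>j. LINT t|circ. cmod (g t) * exp (M * ?u j t))
      \<longlonglongrightarrow> (LINT t|circ. cmod (g t) * exp (M * indicator E t))"
    using E by (intro Linf_integral_norm_mult_exp_tendsto[OF L M U_meas _ U_bound U_lim]) simp
  moreover have "(LINT t|circ. cmod (g t) * exp (M * indicator E t)) = (LINT t|circ. cmod (g t))"
    by (rule Bochner_Integration.integral_cong) (auto simp: E_def indicator_def)
  ultimately have upper: "(\<lambda>j. LINT t|circ. cmod (g t) * exp (M * ?u j t)) \<longlonglongrightarrow> (LINT t|circ. cmod (g t))"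
    by simp
  have "cmod (LINT t|circ. g t) * exp (M * (LINT t|circ. ?u j t) / (2*pi))
      \<le> (LINT t|circ. cmod (g t) * exp (M * ?u j t))" for j
    using Hinf_norm_integral_mult_exp_le[OF g, of "smult (of_real M) (U j)"]
    by (simp add: integral_Re_poly_cis)
  with lower upper show ?thesis
    unfolding E_def by (intro LIMSEQ_le) auto
qed

lemma Hinf_AE_nonzero_if_integral_nonzero:
  assumes g: "Hinf g" and c: "(LINT t|circ. g t) \<noteq> 0"
  shows "AE t in circ. g t \<noteq> 0"
proof (rule ccontr)
  assume not_AE: "\<not> (AE t in circ. g t \<noteq> 0)"
  define E where "E = {t \<in> space circ. g t = 0}"
  define A where "A = (LINT t|circ. cmod (g t))"
  define c where "c = cmod (LINT t|circ. g t)"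
  have E: "E \<in> sets circ"
    unfolding E_def using borel_measurable_Linf[OF Linf_Hinf[OF g]] by measurable
  have "emeasure circ E \<noteq> 0"
    using not_AE AE_iff_measurable[OF E, of "\<lambda>t. g t \<noteq> 0"] unfolding E_def by auto
  then have E_pos: "measure circ E > 0"
    using circ.emeasure_eq_measure[of E] by (simp add: zero_less_measure_iff)
  have c_pos: "c > 0" using assms by (simp add: c_def)
  have "A \<ge> 0" unfolding A_def by (rule integral_nonneg_AE) simp
  define M where "M = 2*pi * (A / c) / measure circ E"
  have "c * exp (M * measure circ E / (2*pi)) \<le> A"
    using Hinf_norm_integral_mult_exp_measure_zeros_le[OF g, of M] E_pos c_pos \<open>A \<ge> 0\<close>
    unfolding A_def c_def E_def M_def by simp
  moreover have "M * measure circ E / (2*pi) = A / c"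
    using E_pos by (simp add: M_def)
  moreover have "A < c * exp (A / c)"
    using exp_gt_self[of "A / c"] c_pos by (simp add: field_simps)
  ultimately show False by simp
qed

lemma Hinf_mult_cis_neg:
  assumes g: "Hinf g" and low: "\<And>k. k < k0 \<Longrightarrow> (LINT t|circ. g t * cis (- (real k * t))) = 0"
  shows "Hinf (\<lambda>t. g t * cis (- (real k0 * t)))"
  unfolding Hinf_iff
proof (intro conjI allI impI)
  show "Linf (\<lambda>t. g t * cis (- (real k0 * t)))"
    by (intro Linf_mult Linf_Hinf g Linf_continuous continuous_intros)
  fix n :: nat assume n: "n \<ge> 1"
  have shift: "g t * cis (- (real k0 * t)) * cis t ^ n = g t * cis ((real n - real k0) * t)" for t
    by (simp add: Complex.DeMoivre cis_mult algebra_simps)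
  show "(LINT t|circ. g t * cis (- (real k0 * t)) * cis t ^ n) = 0"
  proof (cases "k0 < n")
    case True
    then have "cis ((real n - real k0) * t) = cis t ^ (n - k0)" for t
      by (simp add: Complex.DeMoivre of_nat_diff)
    then show ?thesis
      using g True unfolding shift Hinf_iff by simp
  next
    case False
    then have "cis ((real n - real k0) * t) = cis (- (real (k0 - n) * t))" for t
      by (simp add: of_nat_diff algebra_simps)
    then show ?thesis
      using low[of "k0 - n"] False n unfolding shift by simp
  qed
qed

lemma Hinf_AE_nonzero:
  assumes g: "Hinf g" and nz: "\<not> (AE t in circ. g t = 0)"
  shows "AE t in circ. g t \<noteq> 0"
proof -
  obtain m :: int where m: "(LINT t|circ. g t * cis (of_int m * t)) \<noteq> 0"
    using Linf_AE_zero_if_Fourier_coeffs_zero[OF Linf_Hinf[OF g]] nz by blast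
  have "m < 1"
  proof (rule ccontr)
    assume "\<not> m < 1"
    then have "cis (of_int m * t) = cis t ^ nat m" for t
      by (simp add: Complex.DeMoivre)
    then show False using g m \<open>\<not> m < 1\<close> unfolding Hinf_iff by simp
  qed
  then have "\<exists>k::nat. (LINT t|circ. g t * cis (- (real k * t))) \<noteq> 0"
    using m by (intro exI[of _ "nat (- m)"]) simp
  \<comment> \<open>divide by the largest power of \<open>z\<close> dividing \<open>g\<close>, so that the mean becomes nonzero\<close>
  define k0 where "k0 = (LEAST k::nat. (LINT t|circ. g t * cis (- (real k * t))) \<noteq> 0)"
  have k0: "(LINT t|circ. g t * cis (- (real k0 * t))) \<noteq> 0"
    unfolding k0_def by (rule LeastI_ex) fact
  have "Hinf (\<lambda>t. g t * cis (- (real k0 * t)))"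
    using g not_less_Least[of _ "\<lambda>k. (LINT t|circ. g t * cis (- (real k * t))) \<noteq> 0"]
    by (intro Hinf_mult_cis_neg) (auto simp: k0_def)
  from Hinf_AE_nonzero_if_integral_nonzero[OF this k0] show ?thesis
    by eventually_elim simp
qed

section \<open>The Nevanlinna class\<close>

lemma not_AE_circ_False: "\<not> (AE t in circ. False)"
proof
  assume "AE t in circ. False"
  then have "emeasure circ (space circ) = 0"
    using AE_iff_measurable[of "space circ" circ "\<lambda>t. False"]
    by (simp add: atLeastAtMost_def atLeast_def atMost_def Collect_conj_eq)
  moreover have "emeasure circ (space circ) = ennreal (2*pi)"
    using circ.emeasure_eq_measure[of "space circ"] by (simp add: measure_restrict_space)
  ultimately show False by simp
qed

lemma Nev_iff:
  "Nev h \<longleftrightarrow> (\<exists>f g. Hinf f \<and> Hinf g \<and> (AE t in circ. g t \<noteq> 0) \<and> (AE t in circ. h t = f t / g t))"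
proof
  assume "Nev h"
  then show "\<exists>f g. Hinf f \<and> Hinf g \<and> (AE t in circ. g t \<noteq> 0) \<and> (AE t in circ. h t = f t / g t)"
    unfolding Nev_def using Hinf_AE_nonzero by blast
next
  assume "\<exists>f g. Hinf f \<and> Hinf g \<and> (AE t in circ. g t \<noteq> 0) \<and> (AE t in circ. h t = f t / g t)"
  then obtain f g where fg: "Hinf f" "Hinf g" "AE t in circ. g t \<noteq> 0" "AE t in circ. h t = f t / g t"
    by blast
  have "\<not> (AE t in circ. g t = 0)"
  proof
    assume "AE t in circ. g t = 0"
    with fg(3) have "AE t in circ. False" by eventually_elim simp
    then show False using not_AE_circ_False by simp
  qed
  with fg show "Nev h" unfolding Nev_def by blast
qed

lemma Nev_Hinf: "Hinf f \<Longrightarrow> Nev f"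
  unfolding Nev_iff by (intro exI[of _ f] exI[of _ "\<lambda>t. 1"]) (simp add: Hinf_const)

lemma Nev_const: "Nev (\<lambda>t. c)"
  by (rule Nev_Hinf[OF Hinf_const])

lemma Nev_add:
  assumes "Nev h1" "Nev h2"
  shows "Nev (\<lambda>t. h1 t + h2 t)"
proof -
  obtain f1 g1 where 1: "Hinf f1" "Hinf g1" "AE t in circ. g1 t \<noteq> 0" "AE t in circ. h1 t = f1 t / g1 t"
    using assms(1) unfolding Nev_iff by blast
  obtain f2 g2 where 2: "Hinf f2" "Hinf g2" "AE t in circ. g2 t \<noteq> 0" "AE t in circ. h2 t = f2 t / g2 t"
    using assms(2) unfolding Nev_iff by blast
  have "AE t in circ. g1 t * g2 t \<noteq> 0"
    using 1(3) 2(3) by eventually_elim simp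
  moreover have "AE t in circ. h1 t + h2 t = (f1 t * g2 t + f2 t * g1 t) / (g1 t * g2 t)"
    using 1(3,4) 2(3,4) by eventually_elim (simp add: field_simps)
  ultimately show ?thesis
    unfolding Nev_iff
    by (intro exI[of _ "\<lambda>t. f1 t * g2 t + f2 t * g1 t"] exI[of _ "\<lambda>t. g1 t * g2 t"] conjI
        Hinf_add Hinf_mult 1(1,2) 2(1,2))
qed

lemma Nev_mult:
  assumes "Nev h1" "Nev h2"
  shows "Nev (\<lambda>t. h1 t * h2 t)"
proof -
  obtain f1 g1 where 1: "Hinf f1" "Hinf g1" "AE t in circ. g1 t \<noteq> 0" "AE t in circ. h1 t = f1 t / g1 t"
    using assms(1) unfolding Nev_iff by blast
  obtain f2 g2 where 2: "Hinf f2" "Hinf g2" "AE t in circ. g2 t \<noteq> 0" "AE t in circ. h2 t = f2 t / g2 t"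
    using assms(2) unfolding Nev_iff by blast
  have "AE t in circ. g1 t * g2 t \<noteq> 0"
    using 1(3) 2(3) by eventually_elim simp
  moreover have "AE t in circ. h1 t * h2 t = (f1 t * f2 t) / (g1 t * g2 t)"
    using 1(4) 2(4) by eventually_elim simp
  ultimately show ?thesis
    unfolding Nev_iff
    by (intro exI[of _ "\<lambda>t. f1 t * f2 t"] exI[of _ "\<lambda>t. g1 t * g2 t"] conjI Hinf_mult 1(1,2) 2(1,2))
qed

lemma Nev_sum: "finite S \<Longrightarrow> (\<And>i. i \<in> S \<Longrightarrow> Nev (a i)) \<Longrightarrow> Nev (\<lambda>t. \<Sum>i\<in>S. a i t)"
  by (induction S rule: finite_induct) (simp_all add: Nev_const Nev_add)

lemma Nev_prod: "finite S \<Longrightarrow> (\<And>i. i \<in> S \<Longrightarrow> Nev (a i)) \<Longrightarrow> Nev (\<lambda>t. \<Prod>i\<in>S. a i t)"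
  by (induction S rule: finite_induct) (simp_all add: Nev_const Nev_mult)

lemma Nev_AE_nonzero:
  assumes "Nev h" "\<not> (AE t in circ. h t = 0)"
  shows "AE t in circ. h t \<noteq> 0"
proof -
  obtain f g where fg: "Hinf f" "AE t in circ. g t \<noteq> 0" "AE t in circ. h t = f t / g t"
    using assms(1) unfolding Nev_iff by blast
  have "\<not> (AE t in circ. f t = 0)"
  proof
    assume "AE t in circ. f t = 0"
    with fg(3) have "AE t in circ. h t = 0" by eventually_elim simp
    with assms(2) show False by simp
  qed
  with fg(1) have "AE t in circ. f t \<noteq> 0" by (rule Hinf_AE_nonzero)
  with fg(2,3) show ?thesis by eventually_elim simp
qed

section \<open>Matrices over the Nevanlinna class\<close>

lemma Nev_det:
  fixes M :: "real \<Rightarrow> complex^'n::finite^'n"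
  assumes "\<And>i j. Nev (\<lambda>t. M t $ i $ j)"
  shows "Nev (\<lambda>t. det (M t))"
  unfolding det_def
  by (intro Nev_sum Nev_mult Nev_const Nev_prod assms finite_permutations) auto

lemma Nev_matrix_vector_mult:
  fixes M :: "real \<Rightarrow> complex^'n::finite^'m" and x :: "real \<Rightarrow> complex^'n"
  assumes "\<And>i j. Nev (\<lambda>t. M t $ i $ j)" "\<And>j. Nev (\<lambda>t. x t $ j)"
  shows "Nev (\<lambda>t. (M t *v x t) $ i)"
  unfolding matrix_vector_mult_def vec_lambda_beta
  by (intro Nev_sum Nev_mult assms finite_class.finite_UNIV)

text \<open>Cramer's rule: \<open>det M \<cdot> x\<^sub>k\<close> is the determinant of \<open>M\<close> with its \<open>k\<close>-th column
  replaced by \<open>M x\<close>.\<close>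

lemma Nev_det_mult_component:
  fixes M :: "real \<Rightarrow> complex^'n::finite^'n" and x :: "real \<Rightarrow> complex^'n"
  assumes M: "\<And>i j. Nev (\<lambda>t. M t $ i $ j)" and Mx: "\<And>i. Nev (\<lambda>t. (M t *v x t) $ i)"
  shows "Nev (\<lambda>t. det (M t) * x t $ k)"
proof -
  have "Nev (\<lambda>t. det (\<chi> i l. if l = k then (M t *v x t) $ i else M t $ i $ l))"
  proof (rule Nev_det)
    show "Nev (\<lambda>t. (\<chi> i l. if l = k then (M t *v x t) $ i else M t $ i $ l) $ i $ j)" for i j
      by (cases "j = k") (simp_all add: M Mx)
  qed
  then show ?thesis by (simp add: cramer_lemma mult.commute)
qed

lemma indep_mod_Nev_columns_iff:
  fixes M :: "real \<Rightarrow> complex^'r::finite^'m::finite"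
  shows "indep_mod_Nev (\<lambda>j t. column j (M t)) \<longleftrightarrow>
    (\<forall>a. (\<forall>j. Nev (\<lambda>t. a t $ j)) \<and> (\<forall>i. Nev (\<lambda>t. (M t *v a t) $ i))
       \<longrightarrow> (\<forall>j. AE t in circ. a t $ j = 0))"
proof -
  have combination: "(\<Sum>j\<in>UNIV. a j t * (column j (M t) $ i)) = (M t *v (\<chi> j. a j t)) $ i" for a t i
    by (simp add: column_def matrix_vector_mult_def mult.commute)
  show ?thesis
    unfolding indep_mod_Nev_def combination
  proof (intro iffI allI impI)
    fix a :: "real \<Rightarrow> complex^'r" and j
    assume indep: "\<forall>a. (\<forall>j. Nev (a j)) \<and> (\<forall>i. Nev (\<lambda>t. (M t *v (\<chi> j. a j t)) $ i))
        \<longrightarrow> (\<forall>j. AE t in circ. a j t = 0)"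
      and a: "(\<forall>j. Nev (\<lambda>t. a t $ j)) \<and> (\<forall>i. Nev (\<lambda>t. (M t *v a t) $ i))"
    show "AE t in circ. a t $ j = 0"
      using spec[OF indep, of "\<lambda>j t. a t $ j"] a by simp
  next
    fix a :: "'r \<Rightarrow> real \<Rightarrow> complex" and j
    assume indep: "\<forall>a. (\<forall>j. Nev (\<lambda>t. a t $ j)) \<and> (\<forall>i. Nev (\<lambda>t. (M t *v a t) $ i))
        \<longrightarrow> (\<forall>j. AE t in circ. a t $ j = 0)"
      and a: "(\<forall>j. Nev (a j)) \<and> (\<forall>i. Nev (\<lambda>t. (M t *v (\<chi> j. a j t)) $ i))"
    show "AE t in circ. a j t = 0"
      using spec[OF indep, of "\<lambda>t. \<chi> j. a j t"] a by simp
  qed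
qed

lemma indep_mod_Nev_columns_of_mult:
  fixes A :: "real \<Rightarrow> complex^'n::finite^'m::finite" and \<Phi> :: "real \<Rightarrow> complex^'r::finite^'n"
  assumes A: "\<And>i j. Nev (\<lambda>t. A t $ i $ j)"
    and indep: "indep_mod_Nev (\<lambda>j t. column j (A t ** \<Phi> t))"
  shows "indep_mod_Nev (\<lambda>j t. column j (\<Phi> t))"
  unfolding indep_mod_Nev_columns_iff
proof (intro allI impI)
  fix a :: "real \<Rightarrow> complex^'r" and j
  assume a: "(\<forall>j. Nev (\<lambda>t. a t $ j)) \<and> (\<forall>i. Nev (\<lambda>t. (\<Phi> t *v a t) $ i))"
  moreover have "\<forall>i. Nev (\<lambda>t. ((A t ** \<Phi> t) *v a t) $ i)"
    unfolding matrix_vector_mul_assoc[symmetric] using a by (auto intro: Nev_matrix_vector_mult[OF A])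
  ultimately show "AE t in circ. a t $ j = 0"
    using indep unfolding indep_mod_Nev_columns_iff by blast
qed

lemma indep_mod_Nev_columns_mult:
  fixes A :: "real \<Rightarrow> complex^'m::finite^'m" and \<Phi> :: "real \<Rightarrow> complex^'r::finite^'m"
  assumes A: "\<And>i j. Nev (\<lambda>t. A t $ i $ j)" and det_nonzero: "AE t in circ. det (A t) \<noteq> 0"
    and indep: "indep_mod_Nev (\<lambda>j t. column j (\<Phi> t))"
  shows "indep_mod_Nev (\<lambda>j t. column j (A t ** \<Phi> t))"
  unfolding indep_mod_Nev_columns_iff
proof (intro allI impI)
  fix a :: "real \<Rightarrow> complex^'r" and j
  assume a: "(\<forall>j. Nev (\<lambda>t. a t $ j)) \<and> (\<forall>i. Nev (\<lambda>t. ((A t ** \<Phi> t) *v a t) $ i))"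
  define b where "b t = (\<chi> j. det (A t) * a t $ j)" for t
  have "\<forall>j. Nev (\<lambda>t. b t $ j)"
    using a by (simp add: b_def Nev_mult Nev_det A)
  moreover have "(\<Phi> t *v b t) $ i = det (A t) * (\<Phi> t *v a t) $ i" for t i
    by (simp add: b_def matrix_vector_mult_def sum_distrib_left algebra_simps)
  then have "\<forall>i. Nev (\<lambda>t. (\<Phi> t *v b t) $ i)"
    using a Nev_det_mult_component[OF A, of "\<lambda>t. \<Phi> t *v a t"]
    unfolding matrix_vector_mul_assoc[symmetric] by simp
  ultimately have "AE t in circ. b t $ j = 0"
    using indep unfolding indep_mod_Nev_columns_iff by blast
  then show "AE t in circ. a t $ j = 0"
    using det_nonzero by eventually_elim (simp add: b_def)
qed

theorem mainTheorem10:
  fixes A :: "real \<Rightarrow> complex^'m::finite^'m"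
    and \<Phi> :: "real \<Rightarrow> complex^'r::finite^'m"
  assumes "\<forall>i j. Nev_inf (\<lambda>t. A t $ i $ j)"
    and "\<not> (AE t in circ. det (A t) = 0)"
    and "\<forall>i j. L2 (\<lambda>t. \<Phi> t $ i $ j)"
  shows "indep_mod_Nev (\<lambda>j t. column j (\<Phi> t))
     \<longleftrightarrow> indep_mod_Nev (\<lambda>j t. column j (A t ** \<Phi> t))"
proof -
  \<comment> \<open>only the Nevanlinna property of the entries of \<open>A\<close> is needed; the \<open>L\<^sup>2\<close> hypothesis is not\<close>
  have A: "\<And>i j. Nev (\<lambda>t. A t $ i $ j)"
    using assms(1) unfolding Nev_inf_def by blast
  have "AE t in circ. det (A t) \<noteq> 0"
    using Nev_AE_nonzero[OF Nev_det[OF A] assms(2)] .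
  then show ?thesis
    using indep_mod_Nev_columns_mult[OF A] indep_mod_Nev_columns_of_mult[OF A] by blast
qed

end
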